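(* Let $K_1,K_{-1}\subseteq[N]$ be disjoint, $x_{\pm}=\mathbb{1}_{K_1}-\mathbb{1}_{K_{-1}}$, and let $A\in\mathbb{R}^{m\times N}$ satisfy the robust bipolar ternary null space property with constants $0<\rho<1$, $\tau>0$ relative to $K_{-1},K_1$. Let $b=Ax_\pm+e$ with $\|e\|_2\le\eta$. Then every solution $\hat z$ of $\min\|z\|_1$ subject to $\|Az-b\|_2\le\eta$ and $z\in[-1,1]^N$ satisfies $\|\hat z-x_\pm\|_1\le\frac{4\tau}{1-\rho}\eta$.
   Context: $\mathbb{1}_S$ has entries $1$ on $S$, $0$ elsewhere; $K=K_1\cup K_{-1}$, $K^C=[N]\setminus K$. $H_{K_1,K_{-1}}=\{w\in\mathbb{R}^N: w_i\le0\text{ for } i\in K_1,\ w_i\ge0 \text{ for } i\in K_{-1}\}$. $A$ satisfies the robust bipolar ternary null space property with constants $\rho,\tau$ relative to $K_{-1},K_1$ if $\sum_{i\in K_{-1}}v_i-\sum_{i\in K_1}v_i\le\rho\sum_{i\in K^C}|v_i|+\tau\|Av\|_2$ for every $v\in H_{K_1,K_{-1}}$. *)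

theory Defs
  imports "HOL-Analysis.Analysis"
begin

text \<open>Vectors in R^N are modelled as real^'n (index type 'n of cardinality N),
  matrices in R^(m x N) as real^'n^'m.\<close>

definition l1norm :: "real^'n \<Rightarrow> real" where
  "l1norm v = (\<Sum>i\<in>UNIV. \<bar>v $ i\<bar>)"

definition indvec :: "'n set \<Rightarrow> real^'n" where
  "indvec S = (\<chi> i. if i \<in> S then 1 else 0)"

definition H_set :: "'n set \<Rightarrow> 'n set \<Rightarrow> (real^'n) set" where
  "H_set K1 Km1 = {w. (\<forall>i\<in>K1. w $ i \<le> 0) \<and> (\<forall>i\<in>Km1. w $ i \<ge> 0)}"

definition robust_bipolar_ternary_NSP ::
  "real^'n^'m \<Rightarrow> real \<Rightarrow> real \<Rightarrow> 'n set \<Rightarrow> 'n set \<Rightarrow> bool" where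
  "robust_bipolar_ternary_NSP A \<rho> \<tau> Km1 K1 \<longleftrightarrow>
     (\<forall>v\<in>H_set K1 Km1.
        (\<Sum>i\<in>Km1. v $ i) - (\<Sum>i\<in>K1. v $ i)
          \<le> \<rho> * (\<Sum>i\<in>UNIV - (K1 \<union> Km1). \<bar>v $ i\<bar>) + \<tau> * norm (A *v v))"

definition feasible :: "real^'n^'m \<Rightarrow> real^'m \<Rightarrow> real \<Rightarrow> real^'n \<Rightarrow> bool" where
  "feasible A b \<eta> z \<longleftrightarrow> norm (A *v z - b) \<le> \<eta> \<and> (\<forall>i. -1 \<le> z $ i \<and> z $ i \<le> 1)"

definition is_l1_min_solution :: "real^'n^'m \<Rightarrow> real^'m \<Rightarrow> real \<Rightarrow> real^'n \<Rightarrow> bool" where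
  "is_l1_min_solution A b \<eta> z \<longleftrightarrow>
     feasible A b \<eta> z \<and> (\<forall>z'. feasible A b \<eta> z' \<longrightarrow> l1norm z \<le> l1norm z')"

end

theory Submission
  imports Defs
begin

text \<open>Put \<open>x = 1_K1 - 1_K-1\<close> and \<open>v = zhat - x\<close>. The box constraint places \<open>v\<close> in
  \<open>H_{K1,K-1}\<close>, on which \<open>|v|_1 = T + R\<close> with \<open>T = \<Sum>_K-1 v_i - \<Sum>_K1 v_i\<close> and
  \<open>R = \<Sum>_{K^C} |v_i|\<close>. As \<open>x\<close> is feasible, minimality gives \<open>|x + v|_1 \<le> |x|_1\<close>,
  which unfolds to \<open>R \<le> T\<close>; as both \<open>zhat\<close> and \<open>x\<close> are feasible, \<open>|A v|_2 \<le> 2\<eta>\<close>.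
  The null space property then gives \<open>T \<le> \<rho> T + 2\<tau>\<eta>\<close>, hence
  \<open>|v|_1 \<le> 2T \<le> 4\<tau>\<eta>/(1 - \<rho>)\<close>.\<close>

lemma sum_UNIV_split_disjoint:
  fixes f :: "'a::finite \<Rightarrow> 'b::comm_monoid_add"
  assumes "K1 \<inter> Km1 = {}"
  shows "sum f UNIV = sum f K1 + sum f Km1 + sum f (UNIV - (K1 \<union> Km1))"
proof -
  have "sum f UNIV = sum f (K1 \<union> Km1) + sum f (UNIV - (K1 \<union> Km1))"
    by (metis add.commute finite sum.subset_diff top_greatest)
  also have "sum f (K1 \<union> Km1) = sum f K1 + sum f Km1"
    using assms by (simp add: sum.union_disjoint)
  finally show ?thesis .
qed

lemma bipolar_indvec_nth:
  assumes "K1 \<inter> Km1 = {}"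
  shows "indvec K1 $ i - indvec Km1 $ i =
           (if i \<in> K1 then 1 else if i \<in> Km1 then -1 else 0)"
  using assms by (auto simp: indvec_def)

lemma l1norm_bipolar_indvec:
  assumes "K1 \<inter> Km1 = {}"
  shows "l1norm (indvec K1 - indvec Km1) = real (card K1) + real (card Km1)"
proof -
  let ?x = "indvec K1 - indvec Km1"
  have "(\<Sum>i\<in>K1. \<bar>?x $ i\<bar>) = (\<Sum>i\<in>K1. 1)"
    by (rule sum.cong) (use assms in \<open>auto simp: bipolar_indvec_nth\<close>)
  moreover have "(\<Sum>i\<in>Km1. \<bar>?x $ i\<bar>) = (\<Sum>i\<in>Km1. 1)"
    by (rule sum.cong) (use assms in \<open>auto simp: bipolar_indvec_nth\<close>)
  moreover have "(\<Sum>i\<in>UNIV - (K1 \<union> Km1). \<bar>?x $ i\<bar>) = 0"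
    using assms by (simp add: bipolar_indvec_nth)
  ultimately show ?thesis
    unfolding l1norm_def sum_UNIV_split_disjoint[OF assms] by simp
qed

lemma l1norm_bipolar_indvec_add_ge:
  assumes "K1 \<inter> Km1 = {}"
  shows "l1norm (indvec K1 - indvec Km1 + v)
           \<ge> real (card K1) + real (card Km1)
             - ((\<Sum>i\<in>Km1. v $ i) - (\<Sum>i\<in>K1. v $ i))
             + (\<Sum>i\<in>UNIV - (K1 \<union> Km1). \<bar>v $ i\<bar>)"
proof -
  let ?z = "indvec K1 - indvec Km1 + v"
  have "(\<Sum>i\<in>K1. 1 + v $ i) \<le> (\<Sum>i\<in>K1. \<bar>?z $ i\<bar>)"
    by (rule sum_mono) (use assms in \<open>simp add: bipolar_indvec_nth\<close>)
  moreover have "(\<Sum>i\<in>Km1. 1 - v $ i) \<le> (\<Sum>i\<in>Km1. \<bar>?z $ i\<bar>)"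
    by (rule sum_mono) (use assms in \<open>auto simp: bipolar_indvec_nth\<close>)
  moreover have "(\<Sum>i\<in>UNIV - (K1 \<union> Km1). \<bar>?z $ i\<bar>) = (\<Sum>i\<in>UNIV - (K1 \<union> Km1). \<bar>v $ i\<bar>)"
    by (rule sum.cong) (use assms in \<open>simp_all add: bipolar_indvec_nth\<close>)
  ultimately show ?thesis
    unfolding l1norm_def sum_UNIV_split_disjoint[OF assms]
    by (simp add: sum.distrib sum_subtractf)
qed

lemma l1norm_H_set:
  assumes "K1 \<inter> Km1 = {}" and "v \<in> H_set K1 Km1"
  shows "l1norm v = ((\<Sum>i\<in>Km1. v $ i) - (\<Sum>i\<in>K1. v $ i))
                    + (\<Sum>i\<in>UNIV - (K1 \<union> Km1). \<bar>v $ i\<bar>)"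
proof -
  have "(\<Sum>i\<in>K1. \<bar>v $ i\<bar>) = - (\<Sum>i\<in>K1. v $ i)"
    using assms(2) by (simp add: H_set_def flip: sum_negf)
  moreover have "(\<Sum>i\<in>Km1. \<bar>v $ i\<bar>) = (\<Sum>i\<in>Km1. v $ i)"
    using assms(2) by (simp add: H_set_def)
  ultimately show ?thesis
    unfolding l1norm_def sum_UNIV_split_disjoint[OF assms(1)] by simp
qed

lemma box_minus_bipolar_indvec_in_H_set:
  assumes "K1 \<inter> Km1 = {}" and "\<forall>i. -1 \<le> z $ i \<and> z $ i \<le> 1"
  shows "z - (indvec K1 - indvec Km1) \<in> H_set K1 Km1"
  using assms by (auto simp: H_set_def bipolar_indvec_nth)

lemma feasible_bipolar_indvec:
  assumes "K1 \<inter> Km1 = {}"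
    and "b = A *v (indvec K1 - indvec Km1) + e" and "norm e \<le> \<eta>"
  shows "feasible A b \<eta> (indvec K1 - indvec Km1)"
  using assms by (auto simp: feasible_def bipolar_indvec_nth)

lemma feasible_diff_norm_le:
  assumes "feasible A b \<eta> z" and "feasible A b \<eta> z'"
  shows "norm (A *v (z - z')) \<le> 2 * \<eta>"
proof -
  have "A *v (z - z') = (A *v z - b) - (A *v z' - b)"
    by (simp add: matrix_vector_mult_diff_distrib)
  then have "norm (A *v (z - z')) \<le> norm (A *v z - b) + norm (A *v z' - b)"
    by (metis norm_triangle_ineq4)
  with assms show ?thesis by (simp add: feasible_def)
qed

lemma nsp_error_bound:
  fixes T R \<rho> \<tau> a :: real
  assumes "T \<le> \<rho> * R + \<tau> * a" and "R \<le> T" and "0 \<le> R"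
    and "0 \<le> \<rho>" and "\<rho> < 1" and "0 \<le> \<tau>" and "a \<le> 2 * \<eta>"
  shows "T + R \<le> 4 * \<tau> / (1 - \<rho>) * \<eta>"
proof -
  have "T \<le> \<rho> * T + \<tau> * (2 * \<eta>)"
    using assms mult_left_mono[of R T \<rho>] mult_left_mono[of a "2 * \<eta>" \<tau>] by linarith
  then have "T \<le> 2 * \<tau> * \<eta> / (1 - \<rho>)"
    using assms(5) by (simp add: field_simps)
  with assms(2) show ?thesis by simp
qed

theorem theorem3p6:
  fixes A :: "real^'n^'m" and K1 Km1 :: "'n set" and \<rho> \<tau> \<eta> :: real
    and e b :: "real^'m" and zhat :: "real^'n"
  assumes "K1 \<inter> Km1 = {}"
    and "0 < \<rho>" and "\<rho> < 1" and "0 < \<tau>"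
    and "robust_bipolar_ternary_NSP A \<rho> \<tau> Km1 K1"
    and "b = A *v (indvec K1 - indvec Km1) + e"
    and "norm e \<le> \<eta>"
    and "is_l1_min_solution A b \<eta> zhat"
  shows "l1norm (zhat - (indvec K1 - indvec Km1)) \<le> 4 * \<tau> / (1 - \<rho>) * \<eta>"
proof -
  define x where "x = indvec K1 - indvec Km1"
  define v where "v = zhat - x"
  define T where "T = (\<Sum>i\<in>Km1. v $ i) - (\<Sum>i\<in>K1. v $ i)"
  define R where "R = (\<Sum>i\<in>UNIV - (K1 \<union> Km1). \<bar>v $ i\<bar>)"
  have feas_zhat: "feasible A b \<eta> zhat" and feas_x: "feasible A b \<eta> x"
    using assms(8) feasible_bipolar_indvec[OF assms(1,6,7)]
    by (simp_all add: is_l1_min_solution_def x_def)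
  have "l1norm (x + v) \<le> l1norm x"
    using assms(8) feas_x by (simp add: is_l1_min_solution_def v_def)
  then have "R \<le> T"
    using l1norm_bipolar_indvec_add_ge[OF assms(1), of v] l1norm_bipolar_indvec[OF assms(1)]
    by (simp add: x_def T_def R_def)
  moreover have v_H: "v \<in> H_set K1 Km1"
    using box_minus_bipolar_indvec_in_H_set[OF assms(1)] feas_zhat
    by (simp add: feasible_def v_def x_def)
  moreover have "T \<le> \<rho> * R + \<tau> * norm (A *v v)"
    using assms(5) v_H by (simp add: robust_bipolar_ternary_NSP_def T_def R_def)
  moreover have "norm (A *v v) \<le> 2 * \<eta>"
    using feasible_diff_norm_le[OF feas_zhat feas_x] by (simp add: v_def)
  moreover have "0 \<le> R" by (simp add: R_def sum_nonneg)
  ultimately have "T + R \<le> 4 * \<tau> / (1 - \<rho>) * \<eta>"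
    using nsp_error_bound assms(2-4) by (meson less_imp_le)
  then show ?thesis
    using l1norm_H_set[OF assms(1) v_H] by (simp add: T_def R_def v_def x_def)
qed

end
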